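(* Let $T:V\to\mathfrak g$ be a relative Rota–Baxter operator on a Lie triple system $(\mathfrak g,[\cdot,\cdot,\cdot])$ with respect to a representation $(V;\rho)$. Then $$[u,v,w]_T=D(Tu,Tv)w+\rho(Tv,Tw)u-\rho(Tu,Tw)v\qquad(u,v,w\in V)$$ defines a Lie triple system structure on $V$, and $$\varrho(u,v)x=[x,Tu,Tv]-T\big(D(x,Tu)v-\rho(x,Tv)u\big)\qquad(x\in\mathfrak g,\ u,v\in V)$$ defines a representation $\varrho:\otimes^2V\to\mathfrak{gl}(\mathfrak g)$ of $(V,[\cdot,\cdot,\cdot]_T)$ on $\mathfrak g$.
   Context: All vector spaces are over a field of characteristic $0$. A Lie triple system is a vector space with a trilinear bracket satisfying $[x,x,y]=0$, $[x,y,z]+[y,z,x]+[z,x,y]=0$ and $[x,y,[z,w,t]]=[[x,y,z],w,t]+[z,[x,y,w],t]+[z,w,[x,y,t]]$. A representation of a Lie triple system $\mathfrak h$ on $W$ is a bilinear $\rho:\otimes^2\mathfrak h\to\mathfrak{gl}(W)$ with $D(a,b):=\rho(b,a)-\rho(a,b)$ such that $\rho(c,d)\rho(a,b)-\rho(b,d)\rho(a,c)-\rho(a,[b,c,d])+D(b,c)\rho(a,d)=0$ and $\rho([a,b,c],d)+\rho(c,[a,b,d])=[D(a,b),\rho(c,d)]$ for all $a,b,c,d\in\mathfrak h$. A relative Rota–Baxter operator on $\mathfrak g$ with respect to $(V;\rho)$ is a linear $T:V\to\mathfrak g$ with $[Tu,Tv,Tw]=T(D(Tu,Tv)w+\rho(Tv,Tw)u-\rho(Tu,Tw)v)$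 for all $u,v,w\in V$. *)

theory Defs
  imports Complex_Main
begin

definition trilinear ::
  "('k::field \<Rightarrow> 'v \<Rightarrow> 'v::ab_group_add) \<Rightarrow> ('v \<Rightarrow> 'v \<Rightarrow> 'v \<Rightarrow> 'v) \<Rightarrow> bool" where
  "trilinear s br \<longleftrightarrow>
     (\<forall>y z. Vector_Spaces.linear s s (\<lambda>x. br x y z)) \<and>
     (\<forall>x z. Vector_Spaces.linear s s (\<lambda>y. br x y z)) \<and>
     (\<forall>x y. Vector_Spaces.linear s s (\<lambda>z. br x y z))"

definition lie_triple_system ::
  "('k::field \<Rightarrow> 'v \<Rightarrow> 'v::ab_group_add) \<Rightarrow> ('v \<Rightarrow> 'v \<Rightarrow> 'v \<Rightarrow> 'v) \<Rightarrow> bool" where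
  "lie_triple_system s br \<longleftrightarrow>
     vector_space s \<and> trilinear s br \<and>
     (\<forall>x y. br x x y = 0) \<and>
     (\<forall>x y z. br x y z + br y z x + br z x y = 0) \<and>
     (\<forall>x y z w t. br x y (br z w t) =
        br (br x y z) w t + br z (br x y w) t + br z w (br x y t))"

definition rep_D :: "('g \<Rightarrow> 'g \<Rightarrow> 'w \<Rightarrow> 'w::ab_group_add) \<Rightarrow> 'g \<Rightarrow> 'g \<Rightarrow> 'w \<Rightarrow> 'w" where
  "rep_D \<rho> a b = (\<lambda>w. \<rho> b a w - \<rho> a b w)"

text \<open>Elements of gl(W) are the linear
endomorphisms of W; product is composition, bracket is the commutator.\<close>
definition lts_representation ::
  "('k::field \<Rightarrow> 'g \<Rightarrow> 'g::ab_group_add) \<Rightarrow> ('g \<Rightarrow> 'g \<Rightarrow> 'g \<Rightarrow> 'g) \<Rightarrow>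
   ('k \<Rightarrow> 'w \<Rightarrow> 'w::ab_group_add) \<Rightarrow> ('g \<Rightarrow> 'g \<Rightarrow> 'w \<Rightarrow> 'w) \<Rightarrow> bool" where
  "lts_representation sh br sw \<rho> \<longleftrightarrow>
     vector_space sw \<and>
     (\<forall>a b. Vector_Spaces.linear sw sw (\<rho> a b)) \<and>
     (\<forall>b w. Vector_Spaces.linear sh sw (\<lambda>a. \<rho> a b w)) \<and>
     (\<forall>a w. Vector_Spaces.linear sh sw (\<lambda>b. \<rho> a b w)) \<and>
     (\<forall>a b c d w. \<rho> c d (\<rho> a b w) - \<rho> b d (\<rho> a c w) - \<rho> a (br b c d) w
                 + rep_D \<rho> b c (\<rho> a d w) = 0) \<and>
     (\<forall>a b c d w. \<rho> (br a b c) d w + \<rho> c (br a b d) w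
                 = rep_D \<rho> a b (\<rho> c d w) - \<rho> c d (rep_D \<rho> a b w))"

definition relative_RB ::
  "('k::field \<Rightarrow> 'g \<Rightarrow> 'g::ab_group_add) \<Rightarrow> ('g \<Rightarrow> 'g \<Rightarrow> 'g \<Rightarrow> 'g) \<Rightarrow>
   ('k \<Rightarrow> 'v \<Rightarrow> 'v::ab_group_add) \<Rightarrow> ('g \<Rightarrow> 'g \<Rightarrow> 'v \<Rightarrow> 'v) \<Rightarrow> ('v \<Rightarrow> 'g) \<Rightarrow> bool" where
  "relative_RB sg br sv \<rho> T \<longleftrightarrow>
     Vector_Spaces.linear sv sg T \<and>
     (\<forall>u v w. br (T u) (T v) (T w) =
        T (rep_D \<rho> (T u) (T v) w + \<rho> (T v) (T w) u - \<rho> (T u) (T w) v))"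

definition induced_bracket ::
  "('g \<Rightarrow> 'g \<Rightarrow> 'v \<Rightarrow> 'v::ab_group_add) \<Rightarrow> ('v \<Rightarrow> 'g) \<Rightarrow> 'v \<Rightarrow> 'v \<Rightarrow> 'v \<Rightarrow> 'v" where
  "induced_bracket \<rho> T u v w =
     rep_D \<rho> (T u) (T v) w + \<rho> (T v) (T w) u - \<rho> (T u) (T w) v"

definition induced_rep ::
  "('g \<Rightarrow> 'g \<Rightarrow> 'g \<Rightarrow> 'g::ab_group_add) \<Rightarrow> ('g \<Rightarrow> 'g \<Rightarrow> 'v \<Rightarrow> 'v::ab_group_add) \<Rightarrow>
   ('v \<Rightarrow> 'g) \<Rightarrow> 'v \<Rightarrow> 'v \<Rightarrow> 'g \<Rightarrow> 'g" where
  "induced_rep br \<rho> T u v x =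
     br x (T u) (T v) - T (rep_D \<rho> x (T u) v - \<rho> x (T v) u)"

end

theory Submission
  imports Defs "HOL-Library.Product_Plus"
begin

text \<open>On \<open>\<g> \<times> V\<close> the bracket
  \<open>[(x,a),(y,b),(z,c)] = ([x,y,z], D(x,y)c + \<rho>(y,z)a - \<rho>(x,z)b)\<close>
  satisfies the fundamental identity because \<open>\<rho>\<close> is a representation: this is the
  semidirect product. By the relative Rota--Baxter identity the graph \<open>{(Tu,u)}\<close> of \<open>T\<close> is
  closed under this bracket, which restricts there to \<open>[\<cdot>,\<cdot>,\<cdot>]\<^sub>T\<close>; so \<open>V\<close> inherits the
  fundamental identity. The map \<open>(x,a) \<mapsto> x - Ta\<close> identifies \<open>\<g>\<close> with the quotient by the
  graph and carries \<open>[X,(Tu,u),(Tv,v)]\<close> to \<open>\<rho>\<^sub>T(u,v)\<close> applied to the image of \<open>X\<close>.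
  Projecting the fundamental identity with one argument \<open>(x,0)\<close> and the others on the graph
  therefore gives the representation axioms for \<open>\<rho>\<^sub>T\<close>.\<close>

lemma linear_map_add: "Vector_Spaces.linear s1 s2 f \<Longrightarrow> f (x + y) = f x + f y"
  by (rule module_hom.add[of s1 s2]) (simp add: module_hom_iff_linear)

lemma linear_map_diff: "Vector_Spaces.linear s1 s2 f \<Longrightarrow> f (x - y) = f x - f y"
  by (rule module_hom.diff[of s1 s2]) (simp add: module_hom_iff_linear)

lemma linear_map_minus: "Vector_Spaces.linear s1 s2 f \<Longrightarrow> f (- x) = - f x"
  by (rule module_hom.neg[of s1 s2]) (simp add: module_hom_iff_linear)

lemma linear_map_scale: "Vector_Spaces.linear s1 s2 f \<Longrightarrow> f (s1 c x) = s2 c (f x)"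
  by (rule module_hom.scale) (simp add: module_hom_iff_linear)

lemma linear_map_zero: "Vector_Spaces.linear s1 s2 f \<Longrightarrow> f 0 = 0"
  by (rule module_hom.zero[of s1 s2]) (simp add: module_hom_iff_linear)

lemma linear_mapI:
  assumes "vector_space s1" "vector_space s2"
    and "\<And>x y. f (x + y) = f x + f y" "\<And>c x. f (s1 c x) = s2 c (f x)"
  shows "Vector_Spaces.linear s1 s2 f"
  using assms by (simp add: Vector_Spaces.linear_iff)

lemma vector_space_scale_add: "vector_space s \<Longrightarrow> s c (x + y) = s c x + s c y"
  by (rule module.scale_right_distrib) (simp add: module_iff_vector_space)

lemma vector_space_scale_diff: "vector_space s \<Longrightarrow> s c (x - y) = s c x - s c y"
  by (rule module.scale_right_diff_distrib) (simp add: module_iff_vector_space)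

locale lts_with_rep =
  fixes sg :: "'k::field \<Rightarrow> 'g \<Rightarrow> 'g::ab_group_add"
    and sv :: "'k \<Rightarrow> 'v \<Rightarrow> 'v::ab_group_add"
    and br :: "'g \<Rightarrow> 'g \<Rightarrow> 'g \<Rightarrow> 'g"
    and \<rho> :: "'g \<Rightarrow> 'g \<Rightarrow> 'v \<Rightarrow> 'v"
  assumes lts: "lie_triple_system sg br"
    and rep: "lts_representation sg br sv \<rho>"
begin

lemma vector_space_g: "vector_space sg"
  using lts by (simp add: lie_triple_system_def)

lemma vector_space_V: "vector_space sv"
  using rep by (simp add: lts_representation_def)

lemmas g_scale_add = vector_space_scale_add[OF vector_space_g]
lemmas g_scale_diff = vector_space_scale_diff[OF vector_space_g]
lemmas V_scale_add = vector_space_scale_add[OF vector_space_V]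
lemmas V_scale_diff = vector_space_scale_diff[OF vector_space_V]

lemma br_linear:
  "Vector_Spaces.linear sg sg (\<lambda>x. br x y z)"
  "Vector_Spaces.linear sg sg (\<lambda>y. br x y z)"
  "Vector_Spaces.linear sg sg (\<lambda>z. br x y z)"
  using lts by (simp_all add: lie_triple_system_def trilinear_def)

lemmas br_add = br_linear[THEN linear_map_add]
lemmas br_scale = br_linear[THEN linear_map_scale]

lemma br_self: "br x x y = 0"
  using lts by (simp add: lie_triple_system_def)

lemma br_cyclic: "br x y z + br y z x + br z x y = 0"
  using lts by (simp add: lie_triple_system_def)

lemma br_fundamental:
  "br x y (br z w t) = br (br x y z) w t + br z (br x y w) t + br z w (br x y t)"
  using lts unfolding lie_triple_system_def by blast

lemma rho_linear:
  "Vector_Spaces.linear sv sv (\<rho> a b)"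
  "Vector_Spaces.linear sg sv (\<lambda>a. \<rho> a b w)"
  "Vector_Spaces.linear sg sv (\<lambda>b. \<rho> a b w)"
  using rep by (simp_all add: lts_representation_def)

lemmas rho_add = rho_linear[THEN linear_map_add]
lemmas rho_diff = rho_linear[THEN linear_map_diff]
lemmas rho_scale = rho_linear[THEN linear_map_scale]

lemma rho_compat:
  "\<rho> c d (\<rho> a b w) - \<rho> b d (\<rho> a c w) - \<rho> a (br b c d) w + rep_D \<rho> b c (\<rho> a d w) = 0"
  "\<rho> (br a b c) d w + \<rho> c (br a b d) w = rep_D \<rho> a b (\<rho> c d w) - \<rho> c d (rep_D \<rho> a b w)"
  using rep by (simp_all add: lts_representation_def)

lemma rho_br_right:
  "\<rho> a (br b c d) w = \<rho> c d (\<rho> a b w) - \<rho> b d (\<rho> a c w) + rep_D \<rho> b c (\<rho> a d w)"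
  using rho_compat(1)[of c d a b w] by (simp add: algebra_simps)

lemma br_antisym: "br x y z = - br y x z"
proof -
  have "0 = br (x + y) (x + y) z" by (rule br_self[symmetric])
  also have "\<dots> = br x y z + br y x z"
    by (simp only: br_add br_self[of x] br_self[of y] add_0_left add_0_right add.commute)
  finally show ?thesis by (simp add: eq_neg_iff_add_eq_0)
qed

lemma br_rotate: "br y z x = br x z y - br x y z"
proof -
  have "br y z x = (br x y z + br y z x + br z x y) - br x y z - br z x y"
    by (simp add: algebra_simps)
  also have "\<dots> = - br x y z - br z x y"
    by (simp only: br_cyclic diff_0)
  also have "\<dots> = br x z y - br x y z"
    by (simp add: br_antisym[of z x y])
  finally show ?thesis .
qed

lemma rep_D_add:
  "rep_D \<rho> a b (u + v) = rep_D \<rho> a b u + rep_D \<rho> a b v"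
  "rep_D \<rho> (a + a') b u = rep_D \<rho> a b u + rep_D \<rho> a' b u"
  "rep_D \<rho> a (b + b') u = rep_D \<rho> a b u + rep_D \<rho> a b' u"
  by (simp_all add: rep_D_def rho_add algebra_simps)

lemma rep_D_diff:
  "rep_D \<rho> a b (u - v) = rep_D \<rho> a b u - rep_D \<rho> a b v"
  "rep_D \<rho> (a - a') b u = rep_D \<rho> a b u - rep_D \<rho> a' b u"
  "rep_D \<rho> a (b - b') u = rep_D \<rho> a b u - rep_D \<rho> a b' u"
  by (simp_all add: rep_D_def rho_diff algebra_simps)

lemma rep_D_scale:
  "rep_D \<rho> a b (sv k u) = sv k (rep_D \<rho> a b u)"
  "rep_D \<rho> (sg k a) b u = sv k (rep_D \<rho> a b u)"
  "rep_D \<rho> a (sg k b) u = sv k (rep_D \<rho> a b u)"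
  by (simp_all add: rep_D_def rho_scale V_scale_diff)

lemma rep_D_rho:
  "rep_D \<rho> a b (\<rho> c d w) = \<rho> c d (rep_D \<rho> a b w) + \<rho> (br a b c) d w + \<rho> c (br a b d) w"
  using rho_compat(2)[of a b c d w] by (simp add: algebra_simps)

lemma rep_D_rep_D:
  "rep_D \<rho> x y (rep_D \<rho> z w u) =
     rep_D \<rho> (br x y z) w u + rep_D \<rho> z (br x y w) u + rep_D \<rho> z w (rep_D \<rho> x y u)"
proof -
  have "rep_D \<rho> x y (rep_D \<rho> z w u) = rep_D \<rho> x y (\<rho> w z u) - rep_D \<rho> x y (\<rho> z w u)"
    by (simp add: rep_D_def[of \<rho> z w] rep_D_diff)
  also have "\<dots> = (\<rho> w z (rep_D \<rho> x y u) + \<rho> (br x y w) z u + \<rho> w (br x y z) u)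
     - (\<rho> z w (rep_D \<rho> x y u) + \<rho> (br x y z) w u + \<rho> z (br x y w) u)"
    by (simp add: rep_D_rho)
  also have "\<dots> = rep_D \<rho> (br x y z) w u + rep_D \<rho> z (br x y w) u + rep_D \<rho> z w (rep_D \<rho> x y u)"
    by (simp add: rep_D_def algebra_simps)
  finally show ?thesis .
qed

definition semidirect_bracket :: "'g \<times> 'v \<Rightarrow> 'g \<times> 'v \<Rightarrow> 'g \<times> 'v \<Rightarrow> 'g \<times> 'v" where
  "semidirect_bracket X Y Z =
     (br (fst X) (fst Y) (fst Z),
      rep_D \<rho> (fst X) (fst Y) (snd Z) + \<rho> (fst Y) (fst Z) (snd X) - \<rho> (fst X) (fst Z) (snd Y))"

lemma semidirect_bracket_fundamental:
  "semidirect_bracket X Y (semidirect_bracket Z W U) =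
     semidirect_bracket (semidirect_bracket X Y Z) W U + semidirect_bracket Z (semidirect_bracket X Y W) U
     + semidirect_bracket Z W (semidirect_bracket X Y U)"
  by (simp add: prod_eq_iff semidirect_bracket_def br_fundamental[of "fst X" "fst Y" "fst Z"]
      rho_add(1) rho_diff(1) rep_D_add(1) rep_D_diff(1) rho_br_right[of "fst X"] rho_br_right[of "fst Y"]
      rep_D_rho[of "fst X" "fst Y"] rep_D_rep_D[of "fst X" "fst Y" "fst Z" "fst W"] algebra_simps)

lemma semidirect_bracket_antisym: "semidirect_bracket X Y Z = - semidirect_bracket Y X Z"
  by (simp add: semidirect_bracket_def br_antisym[of "fst X"] rep_D_def algebra_simps)

lemma semidirect_bracket_rotate:
  "semidirect_bracket Y Z X = semidirect_bracket X Z Y - semidirect_bracket X Y Z"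
  by (simp add: prod_eq_iff semidirect_bracket_def br_rotate[of "fst Y" "fst Z" "fst X"] rep_D_def algebra_simps)

end

locale relative_rota_baxter = lts_with_rep sg sv br \<rho>
  for sg :: "'k::field \<Rightarrow> 'g \<Rightarrow> 'g::ab_group_add" and sv :: "'k \<Rightarrow> 'v \<Rightarrow> 'v::ab_group_add"
    and br \<rho> +
  fixes T :: "'v \<Rightarrow> 'g"
  assumes relative_RB: "relative_RB sg br sv \<rho> T"
begin

abbreviation br\<^sub>T :: "'v \<Rightarrow> 'v \<Rightarrow> 'v \<Rightarrow> 'v" where
  "br\<^sub>T \<equiv> induced_bracket \<rho> T"

abbreviation \<rho>\<^sub>T :: "'v \<Rightarrow> 'v \<Rightarrow> 'g \<Rightarrow> 'g" where
  "\<rho>\<^sub>T \<equiv> induced_rep br \<rho> T"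

lemma T_linear: "Vector_Spaces.linear sv sg T"
  using relative_RB by (simp add: relative_RB_def)

lemmas T_add = T_linear[THEN linear_map_add]
lemmas T_diff = T_linear[THEN linear_map_diff]
lemmas T_minus = T_linear[THEN linear_map_minus]
lemmas T_scale = T_linear[THEN linear_map_scale]

lemma br_T: "br (T u) (T v) (T w) = T (br\<^sub>T u v w)"
  using relative_RB by (simp add: relative_RB_def induced_bracket_def)

definition graph_embed :: "'v \<Rightarrow> 'g \<times> 'v" where
  "graph_embed u = (T u, u)"

definition graph_quotient :: "'g \<times> 'v \<Rightarrow> 'g" where
  "graph_quotient X = fst X - T (snd X)"

lemma semidirect_bracket_graph:
  "semidirect_bracket (graph_embed u) (graph_embed v) (graph_embed w) = graph_embed (br\<^sub>T u v w)"
  by (simp add: semidirect_bracket_def graph_embed_def induced_bracket_def br_T)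

lemma induced_bracket_fundamental:
  "br\<^sub>T u v (br\<^sub>T w s t) = br\<^sub>T (br\<^sub>T u v w) s t + br\<^sub>T w (br\<^sub>T u v s) t + br\<^sub>T w s (br\<^sub>T u v t)"
proof -
  have "graph_embed (br\<^sub>T u v (br\<^sub>T w s t)) = graph_embed (br\<^sub>T (br\<^sub>T u v w) s t)
      + graph_embed (br\<^sub>T w (br\<^sub>T u v s) t) + graph_embed (br\<^sub>T w s (br\<^sub>T u v t))"
    using semidirect_bracket_fundamental[of "graph_embed u" "graph_embed v" "graph_embed w"
        "graph_embed s" "graph_embed t"]
    by (simp only: semidirect_bracket_graph)
  then show ?thesis
    by (simp add: graph_embed_def)
qed

lemma induced_bracket_linear:
  "Vector_Spaces.linear sv sv (\<lambda>u. br\<^sub>T u v w)"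
  "Vector_Spaces.linear sv sv (\<lambda>v. br\<^sub>T u v w)"
  "Vector_Spaces.linear sv sv (\<lambda>w. br\<^sub>T u v w)"
  by (intro linear_mapI vector_space_V;
      simp add: induced_bracket_def T_add T_scale rep_D_add rep_D_scale rho_add rho_scale
        V_scale_add V_scale_diff algebra_simps)+

lemma induced_bracket_lie_triple_system: "lie_triple_system sv br\<^sub>T"
  unfolding lie_triple_system_def trilinear_def
proof (intro conjI allI vector_space_V induced_bracket_linear induced_bracket_fundamental)
  show "br\<^sub>T u u w = 0" for u w
    by (simp add: induced_bracket_def rep_D_def)
  show "br\<^sub>T u v w + br\<^sub>T v w u + br\<^sub>T w u v = 0" for u v w
    by (simp add: induced_bracket_def rep_D_def algebra_simps)
qed

lemma induced_rep_linear:
  "Vector_Spaces.linear sg sg (\<rho>\<^sub>T u v)"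
  "Vector_Spaces.linear sv sg (\<lambda>u. \<rho>\<^sub>T u v x)"
  "Vector_Spaces.linear sv sg (\<lambda>v. \<rho>\<^sub>T u v x)"
  by (intro linear_mapI vector_space_V vector_space_g;
      simp add: induced_rep_def br_add br_scale T_add T_diff T_scale rep_D_add rep_D_scale
        rho_add rho_scale g_scale_add g_scale_diff V_scale_add V_scale_diff algebra_simps)+

lemmas induced_rep_diff = induced_rep_linear(1)[THEN linear_map_diff]

lemma induced_rep_T: "\<rho>\<^sub>T u v (T a) = T (\<rho> (T u) (T v) a)"
  by (simp add: induced_rep_def br_T induced_bracket_def T_add T_diff rep_D_def algebra_simps)

lemma graph_quotient_add: "graph_quotient (X + Y) = graph_quotient X + graph_quotient Y"
  by (simp add: graph_quotient_def T_add algebra_simps)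

lemma graph_quotient_diff: "graph_quotient (X - Y) = graph_quotient X - graph_quotient Y"
  by (simp add: graph_quotient_def T_diff algebra_simps)

lemma graph_quotient_minus: "graph_quotient (- X) = - graph_quotient X"
  by (simp add: graph_quotient_def T_minus)

lemma graph_quotient_Pair_0: "graph_quotient (x, 0) = x"
  by (simp add: graph_quotient_def linear_map_zero[OF T_linear])

lemma graph_quotient_semidirect_bracket_right:
  "graph_quotient (semidirect_bracket X (graph_embed u) (graph_embed v)) = \<rho>\<^sub>T u v (graph_quotient X)"
proof -
  have "graph_quotient (semidirect_bracket X (graph_embed u) (graph_embed v))
      = \<rho>\<^sub>T u v (fst X) - T (\<rho> (T u) (T v) (snd X))"
    by (simp add: graph_quotient_def semidirect_bracket_def graph_embed_def induced_rep_def
        T_add T_diff algebra_simps)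
  also have "\<dots> = \<rho>\<^sub>T u v (graph_quotient X)"
    by (simp add: graph_quotient_def induced_rep_diff induced_rep_T)
  finally show ?thesis .
qed

lemma graph_quotient_semidirect_bracket_left:
  "graph_quotient (semidirect_bracket (graph_embed u) (graph_embed v) Y) = rep_D \<rho>\<^sub>T u v (graph_quotient Y)"
  by (simp add: semidirect_bracket_rotate[of "graph_embed u" "graph_embed v" Y] graph_quotient_diff
      graph_quotient_semidirect_bracket_right rep_D_def)

lemma graph_quotient_semidirect_bracket_mid:
  "graph_quotient (semidirect_bracket (graph_embed u) Y (graph_embed v)) = - \<rho>\<^sub>T u v (graph_quotient Y)"
  by (simp add: semidirect_bracket_antisym[of "graph_embed u" Y] graph_quotient_minus
      graph_quotient_semidirect_bracket_right)

lemmas graph_quotient_simps = graph_quotient_add graph_quotient_Pair_0 semidirect_bracket_graph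
  graph_quotient_semidirect_bracket_right graph_quotient_semidirect_bracket_mid
  graph_quotient_semidirect_bracket_left

lemma induced_rep_induced_bracket_right:
  "\<rho>\<^sub>T a (br\<^sub>T b c d) x = \<rho>\<^sub>T c d (\<rho>\<^sub>T a b x) - \<rho>\<^sub>T b d (\<rho>\<^sub>T a c x) + rep_D \<rho>\<^sub>T b c (\<rho>\<^sub>T a d x)"
  using arg_cong[OF semidirect_bracket_fundamental[of "(x, 0)" "graph_embed a" "graph_embed b"
      "graph_embed c" "graph_embed d"], of graph_quotient]
  by (simp add: graph_quotient_simps)

lemma rep_D_induced_rep:
  "rep_D \<rho>\<^sub>T a b (\<rho>\<^sub>T c d x) = \<rho>\<^sub>T c d (rep_D \<rho>\<^sub>T a b x) + \<rho>\<^sub>T (br\<^sub>T a b c) d x + \<rho>\<^sub>T c (br\<^sub>T a b d) x"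
  using arg_cong[OF semidirect_bracket_fundamental[of "graph_embed a" "graph_embed b" "(x, 0)"
      "graph_embed c" "graph_embed d"], of graph_quotient]
  by (simp add: graph_quotient_simps)

lemma induced_rep_representation: "lts_representation sv br\<^sub>T sg \<rho>\<^sub>T"
  unfolding lts_representation_def
proof (intro conjI allI vector_space_g induced_rep_linear)
  show "\<rho>\<^sub>T c d (\<rho>\<^sub>T a b x) - \<rho>\<^sub>T b d (\<rho>\<^sub>T a c x) - \<rho>\<^sub>T a (br\<^sub>T b c d) x
      + rep_D \<rho>\<^sub>T b c (\<rho>\<^sub>T a d x) = 0" for a b c d x
    by (simp add: induced_rep_induced_bracket_right)
  show "\<rho>\<^sub>T (br\<^sub>T a b c) d x + \<rho>\<^sub>T c (br\<^sub>T a b d) x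
      = rep_D \<rho>\<^sub>T a b (\<rho>\<^sub>T c d x) - \<rho>\<^sub>T c d (rep_D \<rho>\<^sub>T a b x)" for a b c d x
    by (simp add: rep_D_induced_rep)
qed

end

theorem corollary5p15:
  fixes sg :: "'k::field_char_0 \<Rightarrow> 'g \<Rightarrow> 'g::ab_group_add"
    and sv :: "'k \<Rightarrow> 'v \<Rightarrow> 'v::ab_group_add"
    and br :: "'g \<Rightarrow> 'g \<Rightarrow> 'g \<Rightarrow> 'g"
    and \<rho> :: "'g \<Rightarrow> 'g \<Rightarrow> 'v \<Rightarrow> 'v"
    and T :: "'v \<Rightarrow> 'g"
  assumes "lie_triple_system sg br"
    and "lts_representation sg br sv \<rho>"
    and "relative_RB sg br sv \<rho> T"
  shows "lie_triple_system sv (induced_bracket \<rho> T)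
     \<and> lts_representation sv (induced_bracket \<rho> T) sg (induced_rep br \<rho> T)"
proof -
  interpret relative_rota_baxter sg sv br \<rho> T
    using assms by unfold_locales
  show ?thesis
    using induced_bracket_lie_triple_system induced_rep_representation ..
qed

end
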